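(* Let $G=(V,E)$ be a connected (finite, simple) graph and let $\mathcal{F}$ be a maximum induced forest of $G$ with vertex set $F$. Then there exists a vertex set $A\subseteq V\setminus F$ with $|A|\le 2|F|-2$ such that $G[F\cup A]$ is connected.
   Context: A maximum induced forest of $G$ is an induced subgraph $G[F]$ that is a forest and has the maximum possible number of vertices among all induced forests of $G$. *)

theory Defs
  imports Main
begin

definition simple_graph :: "'a set \<Rightarrow> ('a \<Rightarrow> 'a \<Rightarrow> bool) \<Rightarrow> bool" where
  "simple_graph V E \<longleftrightarrow> finite V \<and> (\<forall>u v. E u v \<longrightarrow> u \<in> V \<and> v \<in> V)
     \<and> (\<forall>u v. E u v \<longrightarrow> E v u) \<and> (\<forall>v. \<not> E v v)"

definition induced_edges :: "('a \<Rightarrow> 'a \<Rightarrow> bool) \<Rightarrow> 'a set \<Rightarrow> ('a \<times> 'a) set" where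
  "induced_edges E S = {(u, v). u \<in> S \<and> v \<in> S \<and> E u v}"

definition connected_on :: "('a \<Rightarrow> 'a \<Rightarrow> bool) \<Rightarrow> 'a set \<Rightarrow> bool" where
  "connected_on E S \<longleftrightarrow> S \<noteq> {} \<and> (\<forall>u\<in>S. \<forall>v\<in>S. (u, v) \<in> (induced_edges E S)\<^sup>*)"

definition has_cycle_on :: "('a \<Rightarrow> 'a \<Rightarrow> bool) \<Rightarrow> 'a set \<Rightarrow> bool" where
  "has_cycle_on E S \<longleftrightarrow> (\<exists>xs. length xs \<ge> 3 \<and> distinct xs \<and> set xs \<subseteq> S
      \<and> (\<forall>i < length xs - 1. E (xs ! i) (xs ! Suc i)) \<and> E (last xs) (hd xs))"

definition induced_forest :: "'a set \<Rightarrow> ('a \<Rightarrow> 'a \<Rightarrow> bool) \<Rightarrow> 'a set \<Rightarrow> bool" where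
  "induced_forest V E F \<longleftrightarrow> F \<subseteq> V \<and> \<not> has_cycle_on E F"

definition max_induced_forest :: "'a set \<Rightarrow> ('a \<Rightarrow> 'a \<Rightarrow> bool) \<Rightarrow> 'a set \<Rightarrow> bool" where
  "max_induced_forest V E F \<longleftrightarrow> induced_forest V E F
     \<and> (\<forall>F'. induced_forest V E F' \<longrightarrow> card F' \<le> card F)"

end

theory Submission
  imports Defs
begin

text \<open>
  Every vertex outside a maximum induced forest \<open>F\<close> has a neighbour in \<open>F\<close>, since otherwise
  it could be added to \<open>F\<close> without creating a cycle. Hence, if a connected set \<open>C\<close> misses a
  vertex of \<open>F\<close>, a shortest path from \<open>C\<close> to \<open>F - C\<close> has at most two interior vertices,
  all outside \<open>F\<close>. Starting from a single vertex of \<open>F\<close> and repeatedly adding such a path,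
  each step gains one vertex of \<open>F\<close> at the cost of at most two vertices outside \<open>F\<close>.
\<close>

lemma connected_on_insert:
  assumes conn: "connected_on E C" and x: "x \<in> C" and xy: "E x y"
    and sym: "\<And>u v. E u v \<Longrightarrow> E v u"
  shows "connected_on E (insert y C)"
proof -
  let ?R = "induced_edges E (insert y C)"
  have "induced_edges E C \<subseteq> ?R"
    unfolding induced_edges_def by auto
  then have in_C: "(u, v) \<in> ?R\<^sup>*" if "u \<in> C" "v \<in> C" for u v
    using conn that rtrancl_mono unfolding connected_on_def by blast
  have "(x, y) \<in> ?R" "(y, x) \<in> ?R"
    using x xy sym unfolding induced_edges_def by auto
  then have "(x, u) \<in> ?R\<^sup>* \<and> (u, x) \<in> ?R\<^sup>*" if "u \<in> insert y C" for u
    using that in_C[OF x] in_C[OF _ x] by auto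
  then show ?thesis
    unfolding connected_on_def by (blast intro: rtrancl_trans)
qed

lemma induced_edges_rtrancl_exit:
  assumes "(a, b) \<in> (induced_edges E V)\<^sup>*" "a \<in> S" "b \<notin> S"
  shows "\<exists>x y. x \<in> S \<and> y \<notin> S \<and> y \<in> V \<and> E x y"
  using assms
proof (induction rule: rtrancl_induct)
  case (step y z)
  then show ?case
    by (cases "y \<in> S") (auto simp: induced_edges_def)
qed simp

lemma cycle_vertex_has_neighbour:
  assumes len: "length xs \<ge> 3" and dist: "distinct xs"
    and path: "\<forall>i < length xs - 1. E (xs ! i) (xs ! Suc i)" and close: "E (last xs) (hd xs)"
    and v: "v \<in> set xs"
  shows "\<exists>w \<in> set xs - {v}. E v w"
proof -
  obtain i where i: "i < length xs" "xs ! i = v"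
    using v by (meson in_set_conv_nth)
  show ?thesis
  proof (cases "i < length xs - 1")
    case True
    then have "xs ! Suc i \<noteq> v"
      using nth_eq_iff_index_eq[OF dist, of "Suc i" i] i by simp
    then show ?thesis
      using True path i by auto
  next
    case False
    then have i_last: "i = length xs - 1"
      using i by simp
    have ne: "xs \<noteq> []"
      using len by auto
    have "xs ! 0 \<noteq> v"
      using nth_eq_iff_index_eq[OF dist, of 0 i] ne i i_last len by simp
    then have "hd xs \<in> set xs - {v}"
      using ne by (simp add: hd_conv_nth)
    moreover have "E v (hd xs)"
      using close ne i i_last by (simp add: last_conv_nth)
    ultimately show ?thesis
      by blast
  qed
qed

lemma has_cycle_on_insert_isolated:
  assumes isolated: "\<forall>z \<in> S. \<not> E x z" and "has_cycle_on E (insert x S)"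
  shows "has_cycle_on E S"
proof -
  obtain xs where xs: "length xs \<ge> 3" "distinct xs" "set xs \<subseteq> insert x S"
    "\<forall>i < length xs - 1. E (xs ! i) (xs ! Suc i)" "E (last xs) (hd xs)"
    using assms(2) unfolding has_cycle_on_def by blast
  have "x \<notin> set xs"
  proof
    assume "x \<in> set xs"
    then obtain w where "w \<in> set xs - {x}" "E x w"
      using cycle_vertex_has_neighbour[OF xs(1,2,4,5)] by blast
    then show False
      using xs(3) isolated by blast
  qed
  then show ?thesis
    using xs unfolding has_cycle_on_def by blast
qed

lemma induced_forest_singleton:
  assumes "v \<in> V"
  shows "induced_forest V E {v}"
proof -
  have "\<not> has_cycle_on E {v}"
  proof
    assume "has_cycle_on E {v}"
    then obtain xs :: "'a list" where xs: "length xs \<ge> 3" "distinct xs" "set xs \<subseteq> {v}"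
      unfolding has_cycle_on_def by blast
    have "length xs = card (set xs)"
      using xs(2) by (simp add: distinct_card)
    also have "\<dots> \<le> card {v}"
      using xs(3) by (intro card_mono) simp_all
    finally show False
      using xs(1) by simp
  qed
  then show ?thesis
    using assms unfolding induced_forest_def by simp
qed

lemma max_induced_forest_dominating:
  assumes g: "simple_graph V E" and m: "max_induced_forest V E F"
    and x: "x \<in> V" "x \<notin> F"
  shows "\<exists>z \<in> F. E x z"
proof (rule ccontr)
  assume isolated: "\<not> (\<exists>z \<in> F. E x z)"
  have FV: "F \<subseteq> V" and acyclic: "\<not> has_cycle_on E F"
    using m unfolding max_induced_forest_def induced_forest_def by auto
  then have "\<not> has_cycle_on E (insert x F)"
    using has_cycle_on_insert_isolated[of F E x] isolated by blast
  then have "induced_forest V E (insert x F)"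
    using FV x unfolding induced_forest_def by blast
  then have "card (insert x F) \<le> card F"
    using m unfolding max_induced_forest_def by blast
  moreover have "finite F"
    using g FV finite_subset unfolding simple_graph_def by blast
  ultimately show False
    using x by simp
qed

lemma max_induced_forest_extend_connected:
  assumes g: "simple_graph V E" and conn_V: "connected_on E V"
    and m: "max_induced_forest V E F"
    and CV: "C \<subseteq> V" and conn_C: "connected_on E C" and missing: "\<not> F \<subseteq> C"
  shows "\<exists>z P. z \<in> F - C \<and> P \<subseteq> V - F \<and> card P \<le> 2 \<and> connected_on E (insert z (C \<union> P))"
proof -
  have sym: "\<And>u v. E u v \<Longrightarrow> E v u" and EV: "\<And>u v. E u v \<Longrightarrow> u \<in> V \<and> v \<in> V"
    using g unfolding simple_graph_def by auto
  have FV: "F \<subseteq> V"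
    using m unfolding max_induced_forest_def induced_forest_def by auto
  define N where "N = {y. y \<notin> C \<and> (\<exists>c \<in> C. E c y)}"
  show ?thesis
  proof (cases "N \<inter> F = {}")
    case False
    then obtain z c where "z \<in> F - C" "c \<in> C" "E c z"
      unfolding N_def by blast
    then show ?thesis
      using connected_on_insert[OF conn_C _ _ sym] by (intro exI[of _ z] exI[of _ "{}"]) auto
  next
    case True
    \<comment> \<open>A path from \<open>C\<close> to \<open>F - C\<close> leaves \<open>C \<union> N\<close> at a vertex \<open>w\<close> at distance 2 from \<open>C\<close>;
      if \<open>w \<notin> F\<close>, its neighbour in \<open>F\<close> is not in \<open>C\<close> because \<open>w \<notin> N\<close>.\<close>
    obtain u where u: "u \<in> C"
      using conn_C unfolding connected_on_def by blast
    obtain b where b: "b \<in> F" "b \<notin> C \<union> N"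
      using missing True by blast
    have "(u, b) \<in> (induced_edges E V)\<^sup>*"
      using conn_V u b CV FV unfolding connected_on_def by blast
    then obtain x w where xw: "x \<in> C \<union> N" "w \<notin> C \<union> N" "w \<in> V" "E x w"
      using induced_edges_rtrancl_exit[of u b E V "C \<union> N"] u b by blast
    then have "x \<in> N"
      unfolding N_def by blast
    then obtain c where c: "c \<in> C" "E c x" and x: "x \<notin> C" "x \<notin> F"
      using True unfolding N_def by blast
    have conn_x: "connected_on E (insert x C)"
      using connected_on_insert[OF conn_C c sym] .
    have conn_xw: "connected_on E (insert w (insert x C))"
      using connected_on_insert[OF conn_x insertI1 xw(4) sym] .
    show ?thesis
    proof (cases "w \<in> F")
      case True
      then show ?thesis
        using conn_xw xw x EV[OF c(2)]
        by (intro exI[of _ w] exI[of _ "{x}"]) auto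
    next
      case False
      then obtain z where z: "z \<in> F" "E w z"
        using max_induced_forest_dominating[OF g m xw(3)] by blast
      have "z \<notin> C"
        using z xw(2) sym unfolding N_def by blast
      moreover have "connected_on E (insert z (insert w (insert x C)))"
        using connected_on_insert[OF conn_xw insertI1 z(2) sym] .
      ultimately show ?thesis
        using False xw x z EV[OF c(2)]
        by (intro exI[of _ z] exI[of _ "{x, w}"]) (auto simp: card_insert_if insert_commute)
    qed
  qed
qed

lemma max_induced_forest_connected_superset:
  assumes g: "simple_graph V E" and conn_V: "connected_on E V"
    and m: "max_induced_forest V E F"
    and "C \<subseteq> V" "connected_on E C" "card (C - F) + 2 \<le> 2 * card (C \<inter> F)"
  shows "\<exists>D. F \<subseteq> D \<and> D \<subseteq> V \<and> connected_on E D \<and> card (D - F) + 2 \<le> 2 * card F"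
  using assms(4-6)
proof (induction "card (F - C)" arbitrary: C rule: less_induct)
  case less
  have FV: "F \<subseteq> V"
    using m unfolding max_induced_forest_def induced_forest_def by blast
  have finV: "finite V"
    using g unfolding simple_graph_def by blast
  then have finC: "finite C" and finF: "finite F"
    using less.prems(1) FV finite_subset by blast+
  show ?case
  proof (cases "F \<subseteq> C")
    case True
    then have "C \<inter> F = F"
      by blast
    then show ?thesis
      using True less.prems by metis
  next
    case False
    then obtain z P where z: "z \<in> F - C" and P: "P \<subseteq> V - F" "card P \<le> 2"
      and conn: "connected_on E (insert z (C \<union> P))"
      using max_induced_forest_extend_connected[OF g conn_V m less.prems(1,2)] by blast
    let ?C' = "insert z (C \<union> P)"
    have "?C' - F = (C - F) \<union> P"
      using z P by blast
    then have "card (?C' - F) \<le> card (C - F) + 2"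
      using P card_Un_le[of "C - F" P] by simp
    moreover have "?C' \<inter> F = insert z (C \<inter> F)"
      using z P by blast
    then have "card (?C' \<inter> F) = card (C \<inter> F) + 1"
      using z finC by simp
    ultimately have bound: "card (?C' - F) + 2 \<le> 2 * card (?C' \<inter> F)"
      using less.prems(3) by linarith
    have "F - ?C' \<subset> F - C"
      using z by blast
    then have "card (F - ?C') < card (F - C)"
      using finF by (simp add: psubset_card_mono)
    moreover have "?C' \<subseteq> V"
      using less.prems(1) z P FV by blast
    ultimately show ?thesis
      using less.hyps conn bound by blast
  qed
qed

theorem lemma3:
  fixes V :: "'a set" and E :: "'a \<Rightarrow> 'a \<Rightarrow> bool" and F :: "'a set"
  assumes "simple_graph V E"
    and "connected_on E V"
    and "max_induced_forest V E F"
  shows "\<exists>A. A \<subseteq> V - F \<and> card A \<le> 2 * card F - 2 \<and> connected_on E (F \<union> A)"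
proof -
  obtain v where "v \<in> V"
    using assms(2) unfolding connected_on_def by blast
  then have "induced_forest V E {v}"
    by (rule induced_forest_singleton)
  then have "card {v} \<le> card F"
    using assms(3) unfolding max_induced_forest_def by blast
  then obtain f where f: "f \<in> F"
    by fastforce
  moreover have "{f} \<subseteq> V"
    using f assms(3) unfolding max_induced_forest_def induced_forest_def by blast
  moreover have "connected_on E {f}"
    unfolding connected_on_def by simp
  ultimately obtain D where D: "F \<subseteq> D" "D \<subseteq> V" "connected_on E D"
    "card (D - F) + 2 \<le> 2 * card F"
    using max_induced_forest_connected_superset[OF assms, of "{f}"] by auto
  have "F \<union> (D - F) = D"
    using D(1) by blast
  moreover have "card (D - F) \<le> 2 * card F - 2"
    using D(4) by linarith
  ultimately show ?thesis
    using D(2,3) by (intro exI[of _ "D - F"]) auto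
qed

end
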